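(* Let $\mathcal{H}$ be a real Hilbert space with orthonormal basis $(\varphi_\gamma)_{\gamma\in\Gamma}$, $\Gamma=\Gamma_1\cup\dots\cup\Gamma_n$ pairwise disjoint, $p_i\in[1,2]$, $p_\gamma=p_i$ for $\gamma\in\Gamma_i$, and weights $w_\gamma\ge c>0$. For $f\in\mathcal{H}$ let $|||f|||^P_{W,P}=\sum_\gamma w_\gamma|\langle f,\varphi_\gamma\rangle|^{p_\gamma}$. If a sequence $(v_k)$ in $\mathcal{H}$ converges weakly to $v$ and $\lim_{k\to\infty}|||v_k|||^P_{W,P}=|||v|||^P_{W,P}$, then $\lim_{k\to\infty}\|v-v_k\|=0$. *)

theory Defs
  imports "HOL-Analysis.Analysis"
begin

definition weakly_converges :: "(nat \<Rightarrow> 'a::real_inner) \<Rightarrow> 'a \<Rightarrow> bool" where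
  "weakly_converges x v \<longleftrightarrow> (\<forall>y. (\<lambda>k. x k \<bullet> y) \<longlonglongrightarrow> v \<bullet> y)"

definition orthonormal_basis :: "('g \<Rightarrow> 'a::real_inner) \<Rightarrow> 'g set \<Rightarrow> bool" where
  "orthonormal_basis phi Gam \<longleftrightarrow>
     (\<forall>g\<in>Gam. norm (phi g) = 1) \<and>
     (\<forall>g\<in>Gam. \<forall>h\<in>Gam. g \<noteq> h \<longrightarrow> phi g \<bullet> phi h = 0) \<and>
     closure (span (phi ` Gam)) = UNIV"

definition wnorm :: "('g \<Rightarrow> real) \<Rightarrow> ('g \<Rightarrow> real) \<Rightarrow> ('g \<Rightarrow> 'a::real_inner) \<Rightarrow> 'g set \<Rightarrow> 'a \<Rightarrow> ennreal" where
  "wnorm w p phi Gam f = (\<Sum>\<^sub>\<infinity>g\<in>Gam. ennreal (w g * \<bar>f \<bullet> phi g\<bar> powr p g))"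

end

(* The coefficientwise terms w_g |<v - v_k, phi_g>|^(p_g) tend to 0 by weak convergence, and since
   p_g <= 2 they are dominated by 4 (w_g |<v_k, phi_g>|^(p_g) + w_g |<v, phi_g>|^(p_g)), whose sums
   converge to the sum of their pointwise limits by hypothesis. A dominated convergence argument with
   varying dominating functions (Pratt's lemma) therefore sends the sum of the terms to 0. Once that sum
   is at most c <= w_g, every coefficient of v - v_k has modulus at most 1, so its square is at most
   |.|^(p_g) <= w_g |.|^(p_g) / c, and Parseval's inequality bounds c ||v - v_k||^2 by the sum. *)

theory Submission
  imports Defs
begin

lemma orthonormal_basis_inner:
  assumes "orthonormal_basis phi Gam" "g \<in> Gam" "h \<in> Gam"
  shows "phi g \<bullet> phi h = (if g = h then 1 else 0)"
  using assms unfolding orthonormal_basis_def by (auto simp: norm_eq_1)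

lemma inner_orthonormal_sum:
  assumes "orthonormal_basis phi Gam" "finite F" "F \<subseteq> Gam" "h \<in> F"
  shows "(\<Sum>g\<in>F. a g *\<^sub>R phi g) \<bullet> phi h = a h"
proof -
  have "(\<Sum>g\<in>F. a g *\<^sub>R phi g) \<bullet> phi h = (\<Sum>g\<in>F. if g = h then a h else 0)"
    unfolding inner_sum_left
    by (rule sum.cong) (use assms in \<open>auto simp: orthonormal_basis_inner[OF assms(1)] subset_iff\<close>)
  then show ?thesis
    using assms by simp
qed

lemma norm_power2_le_dist_span_plus_coeffs:
  assumes onb: "orthonormal_basis phi Gam" and F: "finite F" "F \<subseteq> Gam"
    and y: "y \<in> span (phi ` F)"
  shows "(norm x)\<^sup>2 \<le> (norm (x - y))\<^sup>2 + (\<Sum>g\<in>F. (x \<bullet> phi g)\<^sup>2)"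
proof -
  define P where "P = (\<Sum>g\<in>F. (x \<bullet> phi g) *\<^sub>R phi g)"
  have P_span: "P \<in> span (phi ` F)"
    unfolding P_def by (intro span_sum span_scale span_base) auto
  have orth: "orthogonal (x - P) z" if "z \<in> span (phi ` F)" for z
  proof (rule orthogonal_to_span[OF that])
    fix u assume "u \<in> phi ` F"
    then show "orthogonal (x - P) u"
      using inner_orthonormal_sum[OF onb F] unfolding orthogonal_def P_def
      by (auto simp: inner_diff_left)
  qed
  have "(norm P)\<^sup>2 = (\<Sum>g\<in>F. (norm ((x \<bullet> phi g) *\<^sub>R phi g))\<^sup>2)"
    unfolding P_def
    by (rule norm_sum_Pythagorean[OF F(1)])
       (use F in \<open>auto simp: pairwise_def orthogonal_def orthonormal_basis_inner[OF onb] subset_iff\<close>)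
  also have "\<dots> = (\<Sum>g\<in>F. (x \<bullet> phi g)\<^sup>2)"
    by (rule sum.cong) (use onb F in \<open>auto simp: orthonormal_basis_def power_mult_distrib\<close>)
  finally have norm_P: "(norm P)\<^sup>2 = (\<Sum>g\<in>F. (x \<bullet> phi g)\<^sup>2)" .
  have "(norm x)\<^sup>2 = (norm (x - P))\<^sup>2 + (norm P)\<^sup>2"
    using norm_add_Pythagorean[OF orth[OF P_span]] by simp
  moreover have "(norm (x - y))\<^sup>2 = (norm (x - P))\<^sup>2 + (norm (P - y))\<^sup>2"
    using norm_add_Pythagorean[OF orth[OF span_diff[OF P_span y]]] by simp
  ultimately show ?thesis
    using norm_P by simp
qed

text \<open>The half of Parseval's identity that uses the density of the span of the basis.\<close>

lemma norm_power2_le_infsum_coeffs: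
  assumes onb: "orthonormal_basis phi Gam"
    and summable: "(\<lambda>g. (x \<bullet> phi g)\<^sup>2) summable_on Gam"
  shows "(norm x)\<^sup>2 \<le> (\<Sum>\<^sub>\<infinity>g\<in>Gam. (x \<bullet> phi g)\<^sup>2)"
proof (rule field_le_epsilon)
  fix e :: real assume "e > 0"
  have "x \<in> closure (span (phi ` Gam))"
    using onb unfolding orthonormal_basis_def by auto
  then obtain y where y: "y \<in> span (phi ` Gam)" and "dist y x < sqrt e"
    using \<open>e > 0\<close> by (meson closure_approachable real_sqrt_gt_zero)
  then have dist_y: "(norm (x - y))\<^sup>2 < e"
    using \<open>e > 0\<close> real_sqrt_less_iff[of "(norm (x - y))\<^sup>2" e]
    by (simp add: dist_norm norm_minus_commute)
  obtain t r where t: "finite t" "t \<subseteq> phi ` Gam" and y_t: "y = (\<Sum>a\<in>t. r a *\<^sub>R a)"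
    using y by (auto simp: span_explicit)
  obtain F where F: "F \<subseteq> Gam" "t = phi ` F" "finite F"
    using t by (meson finite_subset_image)
  have "y \<in> span (phi ` F)"
    unfolding y_t F(2)[symmetric] by (intro span_sum span_scale span_base)
  have "(\<Sum>g\<in>F. (x \<bullet> phi g)\<^sup>2) \<le> (\<Sum>\<^sub>\<infinity>g\<in>Gam. (x \<bullet> phi g)\<^sup>2)"
    using infsum_mono_neutral[of "\<lambda>g. (x \<bullet> phi g)\<^sup>2" F "\<lambda>g. (x \<bullet> phi g)\<^sup>2" Gam] F summable
    by auto
  then show "(norm x)\<^sup>2 \<le> (\<Sum>\<^sub>\<infinity>g\<in>Gam. (x \<bullet> phi g)\<^sup>2) + e"
    using norm_power2_le_dist_span_plus_coeffs[OF onb F(3,1) \<open>y \<in> span (phi ` F)\<close>, of x] dist_y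
    by linarith
qed

lemma infsum_eq_sum_plus_infsum_Diff:
  fixes f :: "'a \<Rightarrow> 'b::banach"
  assumes "f summable_on A" "finite B" "B \<subseteq> A"
  shows "infsum f A = sum f B + infsum f (A - B)"
proof -
  have "infsum f A = infsum f (B \<union> (A - B))"
    using assms(3) by (simp add: Un_absorb1)
  also have "\<dots> = infsum f B + infsum f (A - B)"
    by (rule infsum_Un_disjoint) (use assms in \<open>auto intro: summable_on_subset_banach\<close>)
  finally show ?thesis
    using assms(2) by simp
qed

text \<open>Pratt's lemma (dominated convergence with varying dominating functions) for unordered sums.\<close>

lemma infsum_tendsto_zero_dominated:
  fixes G H :: "nat \<Rightarrow> 'a \<Rightarrow> real" and g :: "'a \<Rightarrow> real"
  assumes H_nonneg: "\<And>k x. x \<in> A \<Longrightarrow> 0 \<le> H k x"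
    and H_le_G: "\<And>k x. x \<in> A \<Longrightarrow> H k x \<le> G k x"
    and G_summable: "eventually (\<lambda>k. G k summable_on A) sequentially"
    and g_summable: "g summable_on A"
    and G_lim: "\<And>x. x \<in> A \<Longrightarrow> (\<lambda>k. G k x) \<longlonglongrightarrow> g x"
    and G_infsum_lim: "(\<lambda>k. infsum (G k) A) \<longlonglongrightarrow> infsum g A"
    and H_lim: "\<And>x. x \<in> A \<Longrightarrow> (\<lambda>k. H k x) \<longlonglongrightarrow> 0"
  shows "eventually (\<lambda>k. H k summable_on A) sequentially"
    and "(\<lambda>k. infsum (H k) A) \<longlonglongrightarrow> 0"
proof -
  have H_summable: "H k summable_on A" if "G k summable_on A" for k
    by (rule summable_on_comparison_test[OF that]) (use H_nonneg H_le_G in auto)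
  show "eventually (\<lambda>k. H k summable_on A) sequentially"
    using G_summable by (rule eventually_mono) (rule H_summable)
  show "(\<lambda>k. infsum (H k) A) \<longlonglongrightarrow> 0"
  proof (rule tendstoI)
    fix e :: real assume "e > 0"
    obtain B where B: "finite B" "B \<subseteq> A" and "dist (sum g B) (infsum g A) \<le> e / 4"
      using infsum_finite_approximation[OF g_summable, of "e / 4"] \<open>e > 0\<close> by auto
    then have "infsum g A - sum g B < e / 2"
      using \<open>e > 0\<close> unfolding dist_real_def abs_le_iff by linarith
    moreover have "(\<lambda>k. infsum (G k) A - sum (G k) B) \<longlonglongrightarrow> infsum g A - sum g B"
      by (intro tendsto_diff G_infsum_lim tendsto_sum) (use B G_lim in auto)
    ultimately have G_tail: "eventually (\<lambda>k. infsum (G k) A - sum (G k) B < e / 2) sequentially"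
      by (rule order_tendstoD(2)[rotated])
    have H_head: "eventually (\<lambda>k. sum (H k) B < e / 2) sequentially"
      by (rule order_tendstoD(2)[OF tendsto_null_sum]) (use B H_lim \<open>e > 0\<close> in auto)
    show "eventually (\<lambda>k. dist (infsum (H k) A) 0 < e) sequentially"
      using G_tail H_head G_summable
    proof eventually_elim
      case (elim k)
      have "infsum (H k) (A - B) \<le> infsum (G k) (A - B)"
        by (rule infsum_mono)
           (use elim(3) H_summable H_le_G in \<open>auto intro: summable_on_subset_banach\<close>)
      moreover have "infsum (H k) A = sum (H k) B + infsum (H k) (A - B)"
        by (rule infsum_eq_sum_plus_infsum_Diff[OF H_summable[OF elim(3)] B])
      moreover have "infsum (G k) A = sum (G k) B + infsum (G k) (A - B)"
        by (rule infsum_eq_sum_plus_infsum_Diff[OF elim(3) B])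
      ultimately have "infsum (H k) A < e"
        using elim(1,2) by linarith
      moreover have "0 \<le> infsum (H k) A"
        using H_nonneg by (intro infsum_nonneg) auto
      ultimately show ?case
        by simp
    qed
  qed
qed

lemma infsum_ennreal_finiteD:
  fixes f :: "'a \<Rightarrow> real"
  assumes nonneg: "\<And>x. x \<in> A \<Longrightarrow> 0 \<le> f x"
    and finite: "(\<Sum>\<^sub>\<infinity>x\<in>A. ennreal (f x)) < \<infinity>"
  shows "f summable_on A" and "(\<Sum>\<^sub>\<infinity>x\<in>A. ennreal (f x)) = ennreal (infsum f A)"
proof -
  let ?S = "\<Sum>\<^sub>\<infinity>x\<in>A. ennreal (f x)"
  have finite_sums: "(\<Sum>x\<in>F. ennreal (f x)) = ennreal (sum f F)" if "F \<subseteq> A" for F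
    using that nonneg by (intro sum_ennreal) auto
  have "sum f F \<le> enn2real ?S" if "finite F" "F \<subseteq> A" for F
  proof -
    have "ennreal (sum f F) = (\<Sum>\<^sub>\<infinity>x\<in>F. ennreal (f x))"
      using that finite_sums[OF that(2)] by simp
    also have "\<dots> \<le> ?S"
      by (rule infsum_mono_neutral) (use that in \<open>auto intro: nonneg_summable_on_complete\<close>)
    finally have "enn2real (ennreal (sum f F)) \<le> enn2real ?S"
      using finite by (intro enn2real_mono) auto
    moreover have "0 \<le> sum f F"
      using that nonneg by (intro sum_nonneg) auto
    ultimately show ?thesis
      by simp
  qed
  then show summable: "f summable_on A"
    by (intro nonneg_bdd_above_summable_on bdd_aboveI2) (use nonneg in auto)
  have "?S = (SUP F\<in>{F. finite F \<and> F \<subseteq> A}. (\<Sum>x\<in>F. ennreal (f x)))"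
    by (rule nonneg_infsum_complete) auto
  also have "\<dots> = (SUP F\<in>{F. finite F \<and> F \<subseteq> A}. ennreal (sum f F))"
    by (rule SUP_cong) (auto simp: finite_sums)
  also have "\<dots> = ennreal (infsum f A)"
    by (rule infsum_nonneg_is_SUPREMUM_ennreal[OF summable nonneg, symmetric])
  finally show "?S = ennreal (infsum f A)" .
qed

lemma tendsto_infsum_if_tendsto_infsum_ennreal:
  fixes F :: "nat \<Rightarrow> 'a \<Rightarrow> real" and f :: "'a \<Rightarrow> real"
  assumes F_nonneg: "\<And>k x. x \<in> A \<Longrightarrow> 0 \<le> F k x" and f_nonneg: "\<And>x. x \<in> A \<Longrightarrow> 0 \<le> f x"
    and lim: "(\<lambda>k. \<Sum>\<^sub>\<infinity>x\<in>A. ennreal (F k x)) \<longlonglongrightarrow> (\<Sum>\<^sub>\<infinity>x\<in>A. ennreal (f x))"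
    and finite: "(\<Sum>\<^sub>\<infinity>x\<in>A. ennreal (f x)) < \<infinity>"
  shows "f summable_on A"
    and "eventually (\<lambda>k. F k summable_on A) sequentially"
    and "(\<lambda>k. infsum (F k) A) \<longlonglongrightarrow> infsum f A"
proof -
  have eventually_finite: "eventually (\<lambda>k. (\<Sum>\<^sub>\<infinity>x\<in>A. ennreal (F k x)) < \<infinity>) sequentially"
    by (rule order_tendstoD(2)[OF lim finite])
  show "f summable_on A"
    by (rule infsum_ennreal_finiteD(1)[OF f_nonneg finite])
  show "eventually (\<lambda>k. F k summable_on A) sequentially"
    using eventually_finite by eventually_elim (rule infsum_ennreal_finiteD(1)[OF F_nonneg])
  have "eventually (\<lambda>k. (\<Sum>\<^sub>\<infinity>x\<in>A. ennreal (F k x)) = ennreal (infsum (F k) A)) sequentially"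
    using eventually_finite by eventually_elim (rule infsum_ennreal_finiteD(2)[OF F_nonneg])
  then have "(\<lambda>k. ennreal (infsum (F k) A)) \<longlonglongrightarrow> ennreal (infsum f A)"
    using lim infsum_ennreal_finiteD(2)[OF f_nonneg finite] by (simp add: tendsto_cong)
  then show "(\<lambda>k. infsum (F k) A) \<longlonglongrightarrow> infsum f A"
    by (rule tendsto_ennrealD) (use F_nonneg f_nonneg in \<open>auto intro!: always_eventually infsum_nonneg\<close>)
qed

lemma abs_diff_powr_le:
  fixes a b p :: real
  assumes "0 \<le> p"
  shows "\<bar>a - b\<bar> powr p \<le> 2 powr p * (\<bar>a\<bar> powr p + \<bar>b\<bar> powr p)"
proof -
  have "\<bar>a - b\<bar> powr p \<le> (2 * max \<bar>a\<bar> \<bar>b\<bar>) powr p"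
    by (rule powr_mono2) (use assms in auto)
  also have "\<dots> = 2 powr p * max \<bar>a\<bar> \<bar>b\<bar> powr p"
    by (simp add: powr_mult)
  also have "max \<bar>a\<bar> \<bar>b\<bar> powr p \<le> \<bar>a\<bar> powr p + \<bar>b\<bar> powr p"
    by (simp add: max_def)
  finally show ?thesis
    by simp
qed

lemma mult_power2_le_mult_abs_powr:
  fixes c w d p :: real
  assumes "0 < c" "c \<le> w" "w * \<bar>d\<bar> powr p \<le> c" "0 < p" "p \<le> 2"
  shows "c * d\<^sup>2 \<le> w * \<bar>d\<bar> powr p"
proof -
  have "w * \<bar>d\<bar> powr p \<le> w * 1"
    using assms by linarith
  then have "\<bar>d\<bar> powr p \<le> 1"
    using assms mult_le_cancel_left_pos[of w] by simp
  then have "\<bar>d\<bar> \<le> 1"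
    using gr_one_powr[of "\<bar>d\<bar>" p] \<open>0 < p\<close> by fastforce
  then have "\<bar>d\<bar> powr 2 \<le> \<bar>d\<bar> powr p"
    by (intro powr_mono') (use assms in auto)
  then have "d\<^sup>2 \<le> \<bar>d\<bar> powr p"
    by simp
  then show ?thesis
    using assms by (intro mult_mono) auto
qed

definition wnorm_term ::
    "('g \<Rightarrow> real) \<Rightarrow> ('g \<Rightarrow> real) \<Rightarrow> ('g \<Rightarrow> 'a::real_inner) \<Rightarrow> 'a \<Rightarrow> 'g \<Rightarrow> real" where
  "wnorm_term w p phi f g = w g * \<bar>f \<bullet> phi g\<bar> powr p g"

lemma wnorm_eq_infsum_wnorm_term:
  "wnorm w p phi Gam f = (\<Sum>\<^sub>\<infinity>g\<in>Gam. ennreal (wnorm_term w p phi f g))"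
  unfolding wnorm_def wnorm_term_def ..

lemma wnorm_term_nonneg: "0 \<le> w g \<Longrightarrow> 0 \<le> wnorm_term w p phi f g"
  unfolding wnorm_term_def by simp

lemma wnorm_term_diff_le:
  assumes "0 \<le> w g" "0 \<le> p g" "p g \<le> 2"
  shows "wnorm_term w p phi (x - y) g \<le> 4 * (wnorm_term w p phi x g + wnorm_term w p phi y g)"
proof -
  have "\<bar>x \<bullet> phi g - y \<bullet> phi g\<bar> powr p g
      \<le> 2 powr p g * (\<bar>x \<bullet> phi g\<bar> powr p g + \<bar>y \<bullet> phi g\<bar> powr p g)"
    by (rule abs_diff_powr_le[OF assms(2)])
  also have "\<dots> \<le> 4 * (\<bar>x \<bullet> phi g\<bar> powr p g + \<bar>y \<bullet> phi g\<bar> powr p g)"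
  proof (rule mult_right_mono)
    show "(2::real) powr p g \<le> 4"
      using powr_mono[of "p g" 2 2] assms by simp
  qed simp
  finally have coeff_bound: "\<bar>x \<bullet> phi g - y \<bullet> phi g\<bar> powr p g
      \<le> 4 * (\<bar>x \<bullet> phi g\<bar> powr p g + \<bar>y \<bullet> phi g\<bar> powr p g)" .
  show ?thesis
    unfolding wnorm_term_def inner_diff_left using mult_left_mono[OF coeff_bound assms(1)]
    by (simp add: algebra_simps)
qed

lemma weakly_converges_diff: "weakly_converges x v \<Longrightarrow> weakly_converges (\<lambda>k. v - x k) 0"
  unfolding weakly_converges_def inner_diff_left
  by (auto intro: tendsto_eq_intros)

lemma tendsto_wnorm_term:
  assumes "weakly_converges x v" "0 < p g"
  shows "(\<lambda>k. wnorm_term w p phi (x k) g) \<longlonglongrightarrow> wnorm_term w p phi v g"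
  unfolding wnorm_term_def using assms unfolding weakly_converges_def
  by (intro tendsto_mult_left tendsto_powr' tendsto_rabs) auto

lemma infsum_wnorm_term_diff_tendsto_zero:
  assumes w_nonneg: "\<forall>g\<in>Gam. 0 \<le> w g" and p: "\<forall>g\<in>Gam. 0 < p g \<and> p g \<le> 2"
    and weak: "weakly_converges vk v"
    and v_summable: "wnorm_term w p phi v summable_on Gam"
    and vk_summable: "eventually (\<lambda>k. wnorm_term w p phi (vk k) summable_on Gam) sequentially"
    and lim: "(\<lambda>k. infsum (wnorm_term w p phi (vk k)) Gam)
      \<longlonglongrightarrow> infsum (wnorm_term w p phi v) Gam"
  shows "eventually (\<lambda>k. wnorm_term w p phi (v - vk k) summable_on Gam) sequentially"
    and "(\<lambda>k. infsum (wnorm_term w p phi (v - vk k)) Gam) \<longlonglongrightarrow> 0"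
proof -
  let ?f = "wnorm_term w p phi"
  define G where "G k g = 4 * (?f (vk k) g + ?f v g)" for k g
  have G_summable: "eventually (\<lambda>k. G k summable_on Gam) sequentially"
    using vk_summable unfolding G_def
    by eventually_elim (intro summable_on_cmult_right summable_on_add v_summable)
  have G_infsum_eq: "eventually (\<lambda>k.
      4 * (infsum (?f (vk k)) Gam + infsum (?f v) Gam) = infsum (G k) Gam) sequentially"
    using vk_summable unfolding G_def
    by eventually_elim (simp only: infsum_cmult_right' infsum_add v_summable)
  have "(\<lambda>k. 4 * (infsum (?f (vk k)) Gam + infsum (?f v) Gam))
      \<longlonglongrightarrow> infsum (\<lambda>g. 8 * ?f v g) Gam"
    using tendsto_mult_left[OF tendsto_add[OF lim tendsto_const], of 4 "infsum (?f v) Gam"]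
    by (simp add: infsum_cmult_right')
  then have G_infsum_lim: "(\<lambda>k. infsum (G k) Gam) \<longlonglongrightarrow> infsum (\<lambda>g. 8 * ?f v g) Gam"
    using G_infsum_eq by (rule Lim_transform_eventually)
  have H_lim: "(\<lambda>k. ?f (v - vk k) g) \<longlonglongrightarrow> 0" if "g \<in> Gam" for g
    using tendsto_wnorm_term[OF weakly_converges_diff[OF weak], of p g w phi] p that
    by (simp add: wnorm_term_def)
  have H_nonneg: "0 \<le> ?f (v - vk k) g" if "g \<in> Gam" for k g
    using w_nonneg that by (simp add: wnorm_term_nonneg)
  have H_le_G: "?f (v - vk k) g \<le> G k g" if "g \<in> Gam" for k g
    unfolding G_def using wnorm_term_diff_le[of w g p phi v "vk k"] w_nonneg p that by auto
  have G_lim: "(\<lambda>k. G k g) \<longlonglongrightarrow> 8 * ?f v g" if "g \<in> Gam" for g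
  proof -
    have "(\<lambda>k. ?f (vk k) g) \<longlonglongrightarrow> ?f v g"
      by (rule tendsto_wnorm_term[OF weak]) (use p that in auto)
    then have "(\<lambda>k. 4 * (?f (vk k) g + ?f v g)) \<longlonglongrightarrow> 4 * (?f v g + ?f v g)"
      by (intro tendsto_mult_left tendsto_add tendsto_const)
    then show ?thesis
      unfolding G_def by simp
  qed
  have "(\<lambda>g. 8 * ?f v g) summable_on Gam"
    by (rule summable_on_cmult_right[OF v_summable])
  then show "eventually (\<lambda>k. ?f (v - vk k) summable_on Gam) sequentially"
    and "(\<lambda>k. infsum (?f (v - vk k)) Gam) \<longlonglongrightarrow> 0"
    using infsum_tendsto_zero_dominated[OF H_nonneg H_le_G G_summable _ G_lim G_infsum_lim H_lim]
    by blast+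
qed

lemma norm_power2_le_infsum_wnorm_term:
  assumes onb: "orthonormal_basis phi Gam"
    and c_pos: "0 < c" and w_ge: "\<forall>g\<in>Gam. c \<le> w g" and p: "\<forall>g\<in>Gam. 0 < p g \<and> p g \<le> 2"
    and summable: "wnorm_term w p phi x summable_on Gam"
    and small: "infsum (wnorm_term w p phi x) Gam \<le> c"
  shows "c * (norm x)\<^sup>2 \<le> infsum (wnorm_term w p phi x) Gam"
proof -
  have term_le: "wnorm_term w p phi x g \<le> c" if "g \<in> Gam" for g
  proof -
    have "wnorm_term w p phi x g = infsum (wnorm_term w p phi x) {g}"
      by simp
    also have "\<dots> \<le> infsum (wnorm_term w p phi x) Gam"
      by (rule infsum_mono_neutral)
         (use that summable c_pos w_ge in \<open>auto intro: wnorm_term_nonneg order.trans[OF less_imp_le]\<close>)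
    finally show ?thesis
      using small by simp
  qed
  have coeff_le: "c * (x \<bullet> phi g)\<^sup>2 \<le> wnorm_term w p phi x g" if "g \<in> Gam" for g
    using mult_power2_le_mult_abs_powr[OF c_pos] term_le[OF that] w_ge p that
    unfolding wnorm_term_def by auto
  have coeff_summable: "(\<lambda>g. c * (x \<bullet> phi g)\<^sup>2) summable_on Gam"
    by (rule summable_on_comparison_test[OF summable]) (use coeff_le c_pos in auto)
  then have "(\<lambda>g. (x \<bullet> phi g)\<^sup>2) summable_on Gam"
    using c_pos by (simp add: summable_on_cmult_right')
  then have "c * (norm x)\<^sup>2 \<le> c * (\<Sum>\<^sub>\<infinity>g\<in>Gam. (x \<bullet> phi g)\<^sup>2)"
    using norm_power2_le_infsum_coeffs[OF onb] c_pos by simp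
  also have "\<dots> = (\<Sum>\<^sub>\<infinity>g\<in>Gam. c * (x \<bullet> phi g)\<^sup>2)"
    by (simp add: infsum_cmult_right')
  also have "\<dots> \<le> infsum (wnorm_term w p phi x) Gam"
    by (rule infsum_mono[OF coeff_summable summable coeff_le])
  finally show ?thesis .
qed

lemma tendsto_norm_zero_if_infsum_wnorm_term_tendsto_zero:
  assumes onb: "orthonormal_basis phi Gam"
    and c_pos: "0 < c" and w_ge: "\<forall>g\<in>Gam. c \<le> w g" and p: "\<forall>g\<in>Gam. 0 < p g \<and> p g \<le> 2"
    and summable: "eventually (\<lambda>k. wnorm_term w p phi (x k) summable_on Gam) sequentially"
    and lim: "(\<lambda>k. infsum (wnorm_term w p phi (x k)) Gam) \<longlonglongrightarrow> 0"
  shows "(\<lambda>k. norm (x k)) \<longlonglongrightarrow> 0"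
proof (rule Lim_null_comparison)
  have "eventually (\<lambda>k. infsum (wnorm_term w p phi (x k)) Gam \<le> c) sequentially"
    using order_tendstoD(2)[OF lim c_pos] by (rule eventually_mono) simp
  with summable show "eventually (\<lambda>k. norm (norm (x k))
      \<le> sqrt (infsum (wnorm_term w p phi (x k)) Gam / c)) sequentially"
  proof eventually_elim
    case (elim k)
    then have "c * (norm (x k))\<^sup>2 \<le> infsum (wnorm_term w p phi (x k)) Gam"
      by (intro norm_power2_le_infsum_wnorm_term[OF onb c_pos w_ge p])
    then show ?case
      using c_pos by (simp add: real_le_rsqrt pos_le_divide_eq mult.commute)
  qed
  show "(\<lambda>k. sqrt (infsum (wnorm_term w p phi (x k)) Gam / c)) \<longlonglongrightarrow> 0"
    using tendsto_real_sqrt[OF tendsto_divide_zero[OF lim]] by simp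
qed

theorem lemma6p16:
  fixes phi :: "'g \<Rightarrow> 'a::{real_inner, complete_space}"
    and Gam :: "'g set"
    and n :: nat
    and Gs :: "nat \<Rightarrow> 'g set"
    and ps :: "nat \<Rightarrow> real"
    and p w :: "'g \<Rightarrow> real"
    and c :: real
    and vk :: "nat \<Rightarrow> 'a" and v :: 'a
  assumes onb: "orthonormal_basis phi Gam"
    and Gs_union: "(\<Union>i<n. Gs i) = Gam"
    and Gs_disj: "\<forall>i<n. \<forall>j<n. i \<noteq> j \<longrightarrow> Gs i \<inter> Gs j = {}"
    and ps_range: "\<forall>i<n. 1 \<le> ps i \<and> ps i \<le> 2"
    and p_def: "\<forall>i<n. \<forall>g\<in>Gs i. p g = ps i"
    and c_pos: "c > 0"
    and w_ge: "\<forall>g\<in>Gam. w g \<ge> c"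
    and weak: "weakly_converges vk v"
    and fin: "wnorm w p phi Gam v < \<infinity>"
    and lim: "(\<lambda>k. wnorm w p phi Gam (vk k)) \<longlonglongrightarrow> wnorm w p phi Gam v"
  shows "(\<lambda>k. norm (v - vk k)) \<longlonglongrightarrow> 0"
proof -
  let ?f = "wnorm_term w p phi"
  have p: "\<forall>g\<in>Gam. 0 < p g \<and> p g \<le> 2"
    using Gs_union p_def ps_range by fastforce
  have w_nonneg: "\<forall>g\<in>Gam. 0 \<le> w g"
    using w_ge c_pos by force
  have nonneg: "0 \<le> ?f x g" if "g \<in> Gam" for x g
    using w_nonneg that by (simp add: wnorm_term_nonneg)
  have "?f v summable_on Gam"
    and "eventually (\<lambda>k. ?f (vk k) summable_on Gam) sequentially"
    and "(\<lambda>k. infsum (?f (vk k)) Gam) \<longlonglongrightarrow> infsum (?f v) Gam"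
    using tendsto_infsum_if_tendsto_infsum_ennreal[of Gam "\<lambda>k. ?f (vk k)" "?f v"]
      nonneg lim fin unfolding wnorm_eq_infsum_wnorm_term by blast+
  then have "eventually (\<lambda>k. ?f (v - vk k) summable_on Gam) sequentially"
    and "(\<lambda>k. infsum (?f (v - vk k)) Gam) \<longlonglongrightarrow> 0"
    by (rule infsum_wnorm_term_diff_tendsto_zero[OF w_nonneg p weak])+
  then show ?thesis
    by (rule tendsto_norm_zero_if_infsum_wnorm_term_tendsto_zero[OF onb c_pos w_ge p])
qed

end
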